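(* Let $a\ge3$ and let $H\in\mathfrak{H}$ (notation in context). Then \[ \{n\in\mathbb{N}:\ \text{every prime } q \text{ dividing } n \text{ satisfies } q\bmod a\in H\}\subseteq\mathcal{E}^*_a. \]
   Context: Let $a\ge3$ have canonical factorization $a=2^{\gamma_0}p_1^{\gamma_1}\cdots p_k^{\gamma_k}$ ($p_i$ distinct odd primes). Let $G=(\mathbb{Z}/a\mathbb{Z})^*$, identified by the Chinese remainder theorem with $G_0\times G_1\times\cdots\times G_k$, where $G_0=(\mathbb{Z}/2^{\gamma_0}\mathbb{Z})^*$ and $G_i=(\mathbb{Z}/p_i^{\gamma_i}\mathbb{Z})^*$. For $1\le i\le k$ let $H_i$ be the unique maximal subgroup of the cyclic group $G_i$ not containing $-1$ (its subgroup of odd order); its index is $2^{m_i}$ where $2^{m_i}\|p_i-1$. Let $H_0=G_0$ (trivial) if $\gamma_0\le1$; if $\gamma_0\ge2$, $H_0$ denotes any subgroup of $G_0$ of index $2$ not containing $-1\bmod 2^{\gamma_0}$. Let $\delta=0$ if $\gamma_0\le1$ and $\delta=2$ if $\gamma_0\ge2$, and define $m\ge1$ by $2^m\|\gcd(\delta,p_1-1,\dots,p_k-1)$. Let $\mathfrak{H}$ be the set of subgroups of $G$ of the form $G_0\times\cdots\times G_{i-1}\times H_i\times G_{i+1}\times\cdots\times G_k$ ($0\le i\le k$, any allowed choice of $H_0$ when $i=0$) with index $[G:H]=2^m$. For a positive integer $n$, $R(n;a)$ is the number of pairs $(x,y)$ of positive integers with $\frac an=\frac1x+\frac1y$, and $\mathcal{E}^*_a=\{n\in\mathbb{N}:R(n;a)=0,\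 \gcd(n,a)=1\}$. *)

theory Defs
  imports "HOL-Number_Theory.Number_Theory" "HOL-Algebra.Coset"
begin

text \<open>The unit group of Z/qZ, as the units of the residue ring (carrier = reduced residues in 0..q-1).\<close>
definition unitgrp :: "nat \<Rightarrow> int monoid" where
  "unitgrp q = units_of (residue_ring (int q))"

definition neg_one :: "nat \<Rightarrow> int" where
  "neg_one q = int q - 1"

text \<open>Pull back a subgroup S of (Z/qZ)^* (q the exact prime-power part of a) to (Z/aZ)^*;
  via CRT this is G_0 x ... x S x ... x G_k.\<close>
definition lift_sub :: "nat \<Rightarrow> nat \<Rightarrow> int set \<Rightarrow> int set" where
  "lift_sub a q S = {x \<in> carrier (unitgrp a). x mod int q \<in> S}"

definition delta :: "nat \<Rightarrow> nat" where
  "delta a = (if multiplicity (2::nat) a \<ge> 2 then 2 else 0)"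

definition mexp :: "nat \<Rightarrow> nat" where
  "mexp a = multiplicity (2::nat)
     (Gcd (insert (delta a) {p - 1 | p. prime p \<and> p dvd a \<and> odd p}))"

definition frakH :: "nat \<Rightarrow> int set set" where
  "frakH a = {H.
     ((\<exists>p S. prime p \<and> odd p \<and> p dvd a \<and>
         (let q = p ^ multiplicity p a in
            subgroup S (unitgrp q) \<and> neg_one q \<notin> S \<and>
            (\<forall>T. subgroup T (unitgrp q) \<and> neg_one q \<notin> T \<and> S \<subseteq> T \<longrightarrow> T = S) \<and>
            H = lift_sub a q S))
      \<or> (multiplicity (2::nat) a \<le> 1 \<and> H = carrier (unitgrp a))
      \<or> (\<exists>S. multiplicity (2::nat) a \<ge> 2 \<and>
         (let q = 2 ^ multiplicity (2::nat) a in
            subgroup S (unitgrp q) \<and> card (rcosets\<^bsub>unitgrp q\<^esub> S) = 2 \<and>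
            neg_one q \<notin> S \<and> H = lift_sub a q S)))
     \<and> card (rcosets\<^bsub>unitgrp a\<^esub> H) = 2 ^ mexp a}"

definition R :: "nat \<Rightarrow> nat \<Rightarrow> nat" where
  "R n a = card {(x, y). x > 0 \<and> y > 0 \<and>
     (of_nat a / of_nat n :: rat) = 1 / of_nat x + 1 / of_nat y}"

definition Estar :: "nat \<Rightarrow> nat set" where
  "Estar a = {n. n > 0 \<and> R n a = 0 \<and> gcd n a = 1}"

end

theory Submission imports Defs begin

(* If a/n = 1/x + 1/y with gcd(n, a) = 1, clearing denominators yields two divisors u, v of n
   with a | u + v. Every H in frakH a is the preimage of a subgroup S of (Z/qZ)^* avoiding -1,
   for some prime-power part q of a. If all prime factors of n lie in H, then every divisor of n
   reduces mod q into S, so u = -v (mod q) would put -1 = u v^-1 into S. *)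

lemma residues_int_of_nat: "1 < q \<Longrightarrow> residues (int q)"
  by unfold_locales simp

lemma carrier_unitgrp:
  "1 < q \<Longrightarrow> carrier (unitgrp q) = {x. 0 < x \<and> x < int q \<and> coprime x (int q)}"
  unfolding unitgrp_def units_of_carrier by (simp add: residues.res_units_eq residues_int_of_nat)

lemma unitgrp_mult: "1 < q \<Longrightarrow> x \<otimes>\<^bsub>unitgrp q\<^esub> y = (x * y) mod int q"
  unfolding unitgrp_def units_of_mult by (simp add: residues.res_mult_eq residues_int_of_nat)

lemma unitgrp_one: "1 < q \<Longrightarrow> \<one>\<^bsub>unitgrp q\<^esub> = 1"
  unfolding unitgrp_def units_of_one by (simp add: residues.res_one_eq residues_int_of_nat)

lemma group_unitgrp:
  assumes "1 < q" shows "group (unitgrp q)"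
proof -
  interpret residues "int q" "residue_ring (int q)"
    using assms by (rule residues_int_of_nat)
  show ?thesis unfolding unitgrp_def by (rule units_group)
qed

lemma mod_mem_subgroup_if_prime_divisors_mod_mem:
  assumes q: "1 < q" and S: "subgroup S (unitgrp q)"
    and "d > 0" and "\<And>p. prime p \<Longrightarrow> p dvd d \<Longrightarrow> int (p mod q) \<in> S"
  shows "int (d mod q) \<in> S"
  using assms(3,4)
proof (induction d rule: prime_divisors_induct)
  case (unit d)
  then show ?case using subgroup.one_closed[OF S] q by (simp add: unitgrp_one)
next
  case (factor p d)
  then have "int (p mod q) \<otimes>\<^bsub>unitgrp q\<^esub> int (d mod q) \<in> S"
    by (intro subgroup.m_closed[OF S]) auto
  then show ?case using q by (simp add: unitgrp_mult mod_mult_eq flip: of_nat_mult of_nat_mod)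
qed simp

lemma neg_one_mem_if_dvd_sum:
  assumes q: "1 < q" and S: "subgroup S (unitgrp q)"
    and s: "s \<in> S" and t: "t \<in> S" and dvd: "int q dvd s + t"
  shows "neg_one q \<in> S"
proof -
  interpret group "unitgrp q" using q by (rule group_unitgrp)
  define w where "w = inv\<^bsub>unitgrp q\<^esub> t"
  have "t \<in> carrier (unitgrp q)" using subgroup.subset[OF S] t by blast
  then have tw: "(t * w) mod int q = 1"
    using q r_inv unfolding w_def by (simp add: unitgrp_mult unitgrp_one)
  have "[s = - t] (mod int q)" using dvd by (simp add: cong_iff_dvd_diff)
  then have "[s * w = - t * w] (mod int q)" by (rule cong_scalar_right)
  then have "[s * w = - (t * w)] (mod int q)" by simp
  moreover have "[t * w = 1] (mod int q)" using tw q by (simp add: cong_def)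
  then have "[- (t * w) = - 1] (mod int q)" by (simp only: cong_minus_minus_iff)
  ultimately have "(s * w) mod int q = (- 1) mod int q" by (simp add: cong_def)
  then have "s \<otimes>\<^bsub>unitgrp q\<^esub> w = neg_one q"
    using q by (simp add: unitgrp_mult neg_one_def zmod_minus1)
  moreover have "s \<otimes>\<^bsub>unitgrp q\<^esub> w \<in> S"
    unfolding w_def using subgroup.m_closed[OF S s subgroup.m_inv_closed[OF S t]] .
  ultimately show ?thesis by simp
qed

lemma coprime_if_prime_divisors_mod_units:
  assumes a: "1 < a" and P: "\<And>p. prime p \<Longrightarrow> p dvd n \<Longrightarrow> int (p mod a) \<in> carrier (unitgrp a)"
  shows "coprime n a"
proof (rule ccontr)
  assume "\<not> coprime n a"
  then obtain p where p: "prime p" "p dvd gcd n a"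
    using prime_factor_nat by (metis coprime_iff_gcd_eq_1)
  then have "coprime (int (p mod a)) (int a)"
    using P[of p] a by (simp add: carrier_unitgrp)
  then have "coprime p a" using a by (simp flip: of_nat_mod)
  moreover have "p dvd a" using p(2) by (rule dvd_trans[OF _ gcd_dvd2])
  ultimately have "is_unit p" by (rule coprime_common_divisor[OF _ dvd_refl])
  then show False using p(1) by simp
qed

lemma unit_fraction_eq_divisorsE:
  fixes a n x y :: nat
  assumes eq: "a * x * y = n * (x + y)" and x: "x > 0" and y: "y > 0" and cop: "coprime n a"
  obtains u v where "u dvd n" "v dvd n" "a dvd u + v"
proof -
  define g where "g = gcd x y"
  have g: "g > 0" unfolding g_def using x by simp
  \<comment> \<open>With x = u g, y = v g and u, v coprime, u v divides n; writing n = u v t, a g = t (u + v).\<close>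
  then obtain u v where uv: "x = u * g" "y = v * g" "coprime u v"
    using gcd_coprime_exists[of x y] unfolding g_def by blast
  have "g * (a * g * u * v) = g * (n * (u + v))"
    using eq unfolding uv by (simp add: algebra_simps)
  then have eq': "a * g * u * v = n * (u + v)" using g by simp
  have "coprime u (u + v)" "coprime (u + v) v"
    using uv(3) by (simp_all only: coprime_iff_gcd_eq_1 gcd_add1 gcd_add2)
  then have "coprime (u * v) (u + v)" by (simp add: ac_simps)
  moreover have "u * v dvd n * (u + v)" unfolding eq'[symmetric] by (simp add: ac_simps)
  ultimately have "u * v dvd n" by (simp add: coprime_dvd_mult_left_iff)
  then obtain t where t: "n = u * v * t" by (elim dvdE)
  have "u * v * (a * g) = u * v * (t * (u + v))" using eq' unfolding t by (simp add: algebra_simps)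
  moreover have "u * v > 0" using x y uv by auto
  ultimately have "a * g = t * (u + v)" by simp
  moreover have "coprime a t" using cop unfolding t by (simp add: coprime_commute)
  ultimately have "a dvd u + v" by (metis coprime_dvd_mult_right_iff dvd_triv_left)
  moreover have "u dvd n" "v dvd n" using t by auto
  ultimately show thesis using that by blast
qed

lemma R_eq_0_if_no_divisor_pair:
  assumes n: "n > 0" and cop: "coprime n a"
    and no_pair: "\<And>u v. u dvd n \<Longrightarrow> v dvd n \<Longrightarrow> \<not> a dvd u + v"
  shows "R n a = 0"
proof -
  have "\<not> (of_nat a / of_nat n :: rat) = 1 / of_nat x + 1 / of_nat y"
    if x: "x > 0" and y: "y > 0" for x y
  proof
    assume "(of_nat a / of_nat n :: rat) = 1 / of_nat x + 1 / of_nat y"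
    then have "(of_nat (a * x * y) :: rat) = of_nat (n * (x + y))"
      using n x y by (simp add: field_simps)
    then have "a * x * y = n * (x + y)" by (simp only: of_nat_eq_iff)
    then show False using unit_fraction_eq_divisorsE x y cop no_pair by metis
  qed
  then have "{(x, y). x > 0 \<and> y > 0 \<and>
      (of_nat a / of_nat n :: rat) = 1 / of_nat x + 1 / of_nat y} = {}" by blast
  then show ?thesis unfolding R_def by (simp only: card.empty)
qed

lemma R_eq_0_if_prime_divisors_mod_mem:
  assumes q: "1 < q" "q dvd a" and S: "subgroup S (unitgrp q)" "neg_one q \<notin> S"
    and n: "n > 0" "coprime n a"
    and P: "\<And>p. prime p \<Longrightarrow> p dvd n \<Longrightarrow> int (p mod q) \<in> S"
  shows "R n a = 0"
proof (rule R_eq_0_if_no_divisor_pair[OF n])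
  have divisor_mod: "int (d mod q) \<in> S" if d: "d dvd n" for d
  proof (rule mod_mem_subgroup_if_prime_divisors_mod_mem[OF q(1) S(1)])
    show "d > 0" using n(1) d by (rule dvd_pos_nat)
    show "int (p mod q) \<in> S" if "prime p" "p dvd d" for p
      using P[OF \<open>prime p\<close> dvd_trans[OF \<open>p dvd d\<close> d]] .
  qed
  fix u v assume u: "u dvd n" and v: "v dvd n"
  show "\<not> a dvd u + v"
  proof
    assume "a dvd u + v"
    with q(2) have "q dvd u + v" by (rule dvd_trans)
    then have "q dvd u mod q + v mod q" by (simp add: dvd_eq_mod_eq_0 mod_add_eq)
    then have "int q dvd int (u mod q) + int (v mod q)" by (metis of_nat_add of_nat_dvd_iff)
    then have "neg_one q \<in> S"
      by (rule neg_one_mem_if_dvd_sum[OF q(1) S(1) divisor_mod[OF u] divisor_mod[OF v]])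
    with S(2) show False by contradiction
  qed
qed

lemma odd_prime_divisorE:
  fixes a :: nat
  assumes "3 \<le> a" and "multiplicity 2 a \<le> 1"
  obtains p where "prime p" "odd p" "p dvd a"
proof -
  obtain y where y: "a = 2 ^ multiplicity 2 a * y" "odd y"
    using multiplicity_decompose'[of a 2] assms(1) by auto
  have "2 ^ multiplicity 2 a \<le> (2::nat)"
    using assms(2) power_increasing[of _ 1 "2::nat"] by simp
  then have "y \<noteq> 1" using y(1) assms(1) by auto
  then obtain p where "prime p" "p dvd y" using prime_factor_nat by blast
  moreover have "p dvd a" by (subst y(1)) (rule dvd_mult[OF \<open>p dvd y\<close>])
  moreover have "odd p" using \<open>p dvd y\<close> y(2) dvd_trans by blast
  ultimately show thesis using that by blast
qed

lemma mexp_pos_if_multiplicity_2_le_1: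
  assumes "3 \<le> a" and "multiplicity 2 a \<le> 1"
  shows "0 < mexp a"
proof -
  define X where "X = insert (delta a) {p - 1 | p. prime p \<and> p dvd a \<and> odd p}"
  obtain p where p: "prime p" "odd p" "p dvd a"
    using odd_prime_divisorE[OF assms] .
  then have "p - 1 \<in> X" "p - 1 \<noteq> 0" unfolding X_def using prime_gt_1_nat[of p] by auto
  then have "Gcd X \<noteq> 0" by (metis Gcd_dvd dvd_0_left)
  moreover have "2 dvd Gcd X"
    using assms(2) prime_gt_1_nat by (intro Gcd_greatest) (auto simp: X_def delta_def odd_pos)
  ultimately show ?thesis unfolding mexp_def X_def by (simp add: prime_multiplicity_gt_zero_iff)
qed

lemma rcosets_carrier_unitgrp:
  assumes "1 < a" shows "rcosets\<^bsub>unitgrp a\<^esub> (carrier (unitgrp a)) = {carrier (unitgrp a)}"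
proof -
  interpret group "unitgrp a" using assms by (rule group_unitgrp)
  show ?thesis
    unfolding RCOSETS_def using subgroup.rcos_const[OF subgroup_self is_group] by auto
qed

lemma frakH_lift_subE:
  assumes a: "3 \<le> a" and H: "H \<in> frakH a"
  obtains q S where "1 < q" "q dvd a" "subgroup S (unitgrp q)" "neg_one q \<notin> S" "H = lift_sub a q S"
proof -
  \<comment> \<open>The index condition rules out the trivial member H = G, because m is positive.\<close>
  have not_trivial: "H \<noteq> carrier (unitgrp a)" if "multiplicity 2 a \<le> 1"
  proof
    assume "H = carrier (unitgrp a)"
    then have "2 ^ mexp a = (1::nat)" using H a by (simp add: frakH_def rcosets_carrier_unitgrp)
    then have "mexp a = 0" by (cases "mexp a") auto
    then show False using mexp_pos_if_multiplicity_2_le_1[OF a that] by simp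
  qed
  have two_dvd: "2 dvd a" if "2 \<le> multiplicity 2 a"
    using that not_dvd_imp_multiplicity_0[of 2 a] by auto
  obtain p S where p: "prime p" "p dvd a"
    and S: "subgroup S (unitgrp (p ^ multiplicity p a))" "neg_one (p ^ multiplicity p a) \<notin> S"
      "H = lift_sub a (p ^ multiplicity p a) S"
    using H a not_trivial two_dvd unfolding frakH_def Let_def
    by (elim CollectE conjE disjE exE) (blast intro: two_is_prime_nat)+
  moreover have "1 < p ^ multiplicity p a"
    using p a prime_multiplicity_gt_zero_iff[of p a] one_less_power[OF prime_gt_1_nat[OF p(1)]]
    by simp
  ultimately show thesis using that multiplicity_dvd by blast
qed

theorem lemma2p7:
  fixes a :: nat and H :: "int set"
  assumes "a \<ge> 3" and "H \<in> frakH a"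
  shows "{n::nat. n > 0 \<and> (\<forall>q::nat. prime q \<and> q dvd n \<longrightarrow> int (q mod a) \<in> H)} \<subseteq> Estar a"
proof
  obtain q S where q: "1 < q" "q dvd a"
    and S: "subgroup S (unitgrp q)" "neg_one q \<notin> S" and H: "H = lift_sub a q S"
    using frakH_lift_subE[OF assms] .
  fix n assume "n \<in> {n::nat. n > 0 \<and> (\<forall>q::nat. prime q \<and> q dvd n \<longrightarrow> int (q mod a) \<in> H)}"
  then have n: "n > 0" and P: "\<And>p. prime p \<Longrightarrow> p dvd n \<Longrightarrow> int (p mod a) \<in> H" by auto
  have cop: "coprime n a"
    using assms(1) P unfolding H lift_sub_def by (intro coprime_if_prime_divisors_mod_units) auto
  have "int (p mod q) \<in> S" if "prime p" "p dvd n" for p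
  proof -
    have "int (p mod a) mod int q \<in> S" using P[OF that] unfolding H lift_sub_def by simp
    also have "int (p mod a) mod int q = int (p mod q)"
      by (simp only: mod_mod_cancel[OF q(2)] flip: of_nat_mod)
    finally show ?thesis .
  qed
  then have "R n a = 0" by (rule R_eq_0_if_prime_divisors_mod_mem[OF q S n cop])
  with n cop show "n \<in> Estar a" unfolding Estar_def coprime_iff_gcd_eq_1 by blast
qed

end
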